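(* Assume there is $\xi>0$ such that $\|\mathbf{n}\cdot\nabla|\phi(\theta)\rangle\|_2\le\xi$ for all $\theta\in\mathbb{R}^K$ and all unit vectors $\mathbf{n}\in\mathbb{R}^K$. Suppose the guiding function $\alpha$ is parameterised by a rectifier neural network with one hidden layer of $L\ge 2K$ neurons, with $W(A)=e^{-A}$ and prior guiding function $F(\theta)=1$. Then for every $\theta\in\mathbb{R}^K$ and every $x<1$, $$\inf_{|\widetilde\psi(\lambda)\rangle\in\mathcal{V}_x}\big\||\widetilde\psi(\lambda)\rangle-|\phi(\theta)\rangle\big\|_2=0 .$$
   Context: Fix $n$ qubits, $\mathcal{H}=(\mathbb{C}^2)^{\otimes n}$, and a parameterised circuit with normalised states $|\phi(\theta)\rangle=U(\theta)|0\rangle^{\otimes n}$, $U(\theta)$ unitary, defined and differentiable for all $\theta\in\Theta=\mathbb{R}^K$; $\|\cdot\|_2$ is the Euclidean norm on $\mathcal{H}$. Rectifier network: with $\mathrm{ReLU}(z)=\max\{0,z\}$ applied componentwise, for input $\theta\in\mathbb{R}^K$ set $h=\mathrm{ReLU}(w\theta+b)\in\mathbb{R}^L$, $A=w_A\cdot h+b_A$, $B=w_B\cdot h+b_B$, where $w\in\mathbb{R}^{L\times K}$, $b,w_A,w_B\in\mathbb{R}^L$, $b_A,b_B\in\mathbb{R}$; $\lambda=(w,b,w_A,b_A,w_B,b_B)\in\Lambda=\mathbb{R}^{KL+3L+2}$. The guiding function is $\alpha(\theta;\lambda)=W(A)e^{iB}F(\theta)$ with a non-negative function $W$ and a prior guiding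 function $F$. Variational state: for $\lambda$ with $C(\lambda)=\int|\alpha(\theta;\lambda)|d\theta$ finite and positive, $|\psi(\lambda)\rangle=C(\lambda)^{-1}\int\alpha(\theta;\lambda)|\phi(\theta)\rangle\,d\theta$, $\langle \mathbb{1}\rangle(\lambda)=\langle\psi(\lambda)|\psi(\lambda)\rangle$, and $|\widetilde\psi(\lambda)\rangle=|\psi(\lambda)\rangle/\sqrt{\langle \mathbb{1}\rangle(\lambda)}$. For a real $x$, $\mathcal{V}_x=\{|\widetilde\psi(\lambda)\rangle:\lambda\in\Lambda,\ \langle \mathbb{1}\rangle(\lambda)\ge x\}$. *)

theory Defs
  imports "HOL-Analysis.Analysis"
begin

text \<open>Hilbert space of n qubits: complex vectors indexed by bit strings
  'n \<Rightarrow> bool, where n = CARD('n). The computational basis state |0...0> is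
  the basis vector at the all-False bit string.\<close>

definition ket0 :: "complex ^ ('n::finite \<Rightarrow> bool)" where
  "ket0 = axis (\<lambda>_. False) 1"

definition cadj :: "complex ^ 'a ^ 'b \<Rightarrow> complex ^ 'b ^ 'a" where
  "cadj M = (\<chi> i j. cnj (M $ j $ i))"

definition unitary_mat :: "complex ^ 'a ^ 'a \<Rightarrow> bool" where
  "unitary_mat M \<longleftrightarrow> M ** cadj M = mat 1 \<and> cadj M ** M = mat 1"

type_synonym ('k, 'l) netparam =
  "(real ^ 'k ^ 'l) \<times> (real ^ 'l) \<times> (real ^ 'l) \<times> real \<times> (real ^ 'l) \<times> real"

definition relu_hidden :: "real ^ 'k ^ 'l \<Rightarrow> real ^ 'l \<Rightarrow> real ^ 'k \<Rightarrow> real ^ 'l" where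
  "relu_hidden w b \<theta> = (\<chi> j. max 0 ((w *v \<theta> + b) $ j))"

definition netA :: "('k::finite, 'l::finite) netparam \<Rightarrow> real ^ 'k \<Rightarrow> real" where
  "netA = (\<lambda>(w, b, wA, bA, wB, bB) \<theta>. wA \<bullet> relu_hidden w b \<theta> + bA)"

definition netB :: "('k::finite, 'l::finite) netparam \<Rightarrow> real ^ 'k \<Rightarrow> real" where
  "netB = (\<lambda>(w, b, wA, bA, wB, bB) \<theta>. wB \<bullet> relu_hidden w b \<theta> + bB)"

definition guiding :: "(real \<Rightarrow> real) \<Rightarrow> (real ^ 'k \<Rightarrow> complex) \<Rightarrow>
    ('k::finite, 'l::finite) netparam \<Rightarrow> real ^ 'k \<Rightarrow> complex" where
  "guiding W F lam \<theta> = complex_of_real (W (netA lam \<theta>)) * cis (netB lam \<theta>) * F \<theta>"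

definition normC :: "(real \<Rightarrow> real) \<Rightarrow> (real ^ 'k \<Rightarrow> complex) \<Rightarrow>
    ('k::finite, 'l::finite) netparam \<Rightarrow> ennreal" where
  "normC W F lam = (\<integral>\<^sup>+ \<theta>. ennreal (cmod (guiding W F lam \<theta>)) \<partial>lborel)"

definition psi :: "(real \<Rightarrow> real) \<Rightarrow> (real ^ 'k \<Rightarrow> complex) \<Rightarrow>
    (real ^ 'k \<Rightarrow> complex ^ 'd) \<Rightarrow> ('k::finite, 'l::finite) netparam \<Rightarrow> complex ^ 'd::finite" where
  "psi W F \<phi> lam = (1 / complex_of_real (enn2real (normC W F lam))) *s
      (\<integral> \<theta>. guiding W F lam \<theta> *s \<phi> \<theta> \<partial>lborel)"

definition exp_one :: "(real \<Rightarrow> real) \<Rightarrow> (real ^ 'k \<Rightarrow> complex) \<Rightarrow>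
    (real ^ 'k \<Rightarrow> complex ^ 'd) \<Rightarrow> ('k::finite, 'l::finite) netparam \<Rightarrow> real" where
  "exp_one W F \<phi> lam = (norm (psi W F \<phi> lam :: complex ^ 'd::finite))\<^sup>2"

definition psi_tilde :: "(real \<Rightarrow> real) \<Rightarrow> (real ^ 'k \<Rightarrow> complex) \<Rightarrow>
    (real ^ 'k \<Rightarrow> complex ^ 'd) \<Rightarrow> ('k::finite, 'l::finite) netparam \<Rightarrow> complex ^ 'd::finite" where
  "psi_tilde W F \<phi> lam = (1 / sqrt (exp_one W F \<phi> lam)) *\<^sub>R psi W F \<phi> lam"

text \<open>V_x: normalised variational states over all admissible lambda
  (C finite and positive, <1> > 0 so that the normalisation is defined) with <1> \<ge> x.\<close>
definition Vset :: "(real \<Rightarrow> real) \<Rightarrow> (real ^ 'k \<Rightarrow> complex) \<Rightarrow>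
    (real ^ 'k \<Rightarrow> complex ^ 'd) \<Rightarrow> ('l::finite) itself \<Rightarrow> real \<Rightarrow> (complex ^ 'd::finite) set" where
  "Vset W F \<phi> (_ :: 'l itself) x =
     {psi_tilde W F \<phi> lam | lam :: ('k::finite, 'l) netparam.
        normC W F lam < \<infinity> \<and> 0 < normC W F lam \<and>
        0 < exp_one W F \<phi> lam \<and> x \<le> exp_one W F \<phi> lam}"

end

theory Submission
  imports Defs "HOL-Probability.Distributions"
begin

text \<open>Since |t| = ReLU t + ReLU (-t), a hidden layer of 2K rectifiers can output
  A(\<theta>) = c |\<theta> - \<theta>0|_1 together with B = 0. The guiding function e^(-A) is then a Laplace
  kernel of width 1/c centred at \<theta>0, and the substitution \<theta> = \<theta>0 + u/c shows that \<psi>(\<lambda>) is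
  the average of \<phi>(\<theta>0 + u/c) against the probability density e^(-|u|_1) / 2^K. As \<phi> is
  continuous and of norm 1, dominated convergence gives \<psi>(\<lambda>) \<rightarrow> \<phi>(\<theta>0) as c \<rightarrow> \<infinity>. Hence
  <1> \<rightarrow> 1, so for large c the normalised state lies in V_x and tends to \<phi>(\<theta>0).\<close>

definition l1_norm :: "real ^ 'k::finite \<Rightarrow> real" where
  "l1_norm u = (\<Sum>i\<in>UNIV. \<bar>u $ i\<bar>)"

lemma continuous_on_l1_norm: "continuous_on S l1_norm"
  unfolding l1_norm_def[abs_def]
  by (intro continuous_intros continuous_on_component continuous_on_id)

lemma borel_measurable_l1_norm [measurable]: "l1_norm \<in> borel_measurable borel"
  by (rule borel_measurable_continuous_onI[OF continuous_on_l1_norm])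

lemma l1_norm_scaleR: "l1_norm (r *\<^sub>R u) = \<bar>r\<bar> * l1_norm u"
  by (simp add: l1_norm_def abs_mult sum_distrib_left)

lemma nn_integral_exp_neg_abs: "(\<integral>\<^sup>+x. ennreal (exp (- \<bar>x\<bar>)) \<partial>lborel) = 2"
proof -
  let ?h = "\<lambda>x::real. ennreal (exp (- x)) * indicator {0..} x"
  have half: "(\<integral>\<^sup>+x. ?h x \<partial>lborel) = 1"
    using nn_intergal_power_times_exp_Ici[of 0] by simp
  have "(\<integral>\<^sup>+x. ennreal (exp (- \<bar>x\<bar>)) \<partial>lborel) = (\<integral>\<^sup>+x. ?h x + ?h (- x) \<partial>lborel)"
    using AE_lborel_singleton[of 0]
    by (intro nn_integral_cong_AE) (auto split: split_indicator elim!: eventually_mono)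
  also have "\<dots> = (\<integral>\<^sup>+x. ?h x \<partial>lborel) + (\<integral>\<^sup>+x. ?h (- x) \<partial>lborel)"
    by (rule nn_integral_add) auto
  also have "(\<integral>\<^sup>+x. ?h (- x) \<partial>lborel) = (\<integral>\<^sup>+x. ?h x \<partial>lborel)"
    using nn_integral_real_affine[of ?h "-1" 0] by simp
  finally show ?thesis
    by (simp add: half)
qed

lemma nn_integral_exp_neg_l1_norm:
  "(\<integral>\<^sup>+u. ennreal (exp (- l1_norm (u :: real ^ 'k::finite))) \<partial>lborel) = 2 ^ CARD('k)"
proof -
  have inj: "inj (\<lambda>i::'k. axis i (1::real))"
    by (auto simp: inj_def axis_eq_axis)
  have Basis: "(Basis :: (real ^ 'k) set) = range (\<lambda>i. axis i 1)"
    by (auto simp: Basis_vec_def)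
  have "ennreal (exp (- l1_norm u)) = (\<Prod>b\<in>Basis. ennreal (exp (- \<bar>u \<bullet> b\<bar>)))"
    for u :: "real ^ 'k"
  proof -
    have "ennreal (exp (- l1_norm u)) = (\<Prod>i\<in>UNIV. ennreal (exp (- \<bar>u $ i\<bar>)))"
      by (simp add: l1_norm_def exp_sum[symmetric] sum_negf prod_ennreal)
    also have "\<dots> = (\<Prod>b\<in>Basis. ennreal (exp (- \<bar>u \<bullet> b\<bar>)))"
      unfolding Basis by (subst prod.reindex[OF inj]) (simp add: inner_axis)
    finally show ?thesis .
  qed
  then have "(\<integral>\<^sup>+u. ennreal (exp (- l1_norm (u :: real ^ 'k))) \<partial>lborel) =
      (\<integral>\<^sup>+u. (\<Prod>b\<in>(Basis :: (real ^ 'k) set). (\<lambda>b x. ennreal (exp (- \<bar>x\<bar>))) b (u \<bullet> b)) \<partial>lborel)"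
    by simp
  also have "\<dots> = (\<Prod>b\<in>(Basis :: (real ^ 'k) set). \<integral>\<^sup>+x. ennreal (exp (- \<bar>x\<bar>)) \<partial>lborel)"
    by (rule nn_integral_lborel_prod) auto
  finally show ?thesis
    by (simp add: nn_integral_exp_neg_abs)
qed

lemma ennreal_two_power: "(2 :: ennreal) ^ n = ennreal (2 ^ n)"
  by (metis ennreal_numeral ennreal_power zero_le_numeral)

lemma integrable_exp_neg_l1_norm: "integrable lborel (\<lambda>u :: real ^ 'k::finite. exp (- l1_norm u))"
  by (rule integrableI_nonneg) (auto simp: nn_integral_exp_neg_l1_norm ennreal_two_power)

lemma integral_exp_neg_l1_norm:
  "(\<integral>u. exp (- l1_norm (u :: real ^ 'k::finite)) \<partial>lborel) = 2 ^ CARD('k)"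
  by (subst integral_eq_nn_integral) (auto simp: nn_integral_exp_neg_l1_norm ennreal_two_power)

lemma nn_integral_lborel_affine:
  fixes f :: "'a::euclidean_space \<Rightarrow> ennreal"
  assumes [measurable]: "f \<in> borel_measurable borel" and "c \<noteq> 0"
  shows "(\<integral>\<^sup>+x. f x \<partial>lborel) = ennreal (\<bar>c\<bar> ^ DIM('a)) * (\<integral>\<^sup>+x. f (t + c *\<^sub>R x) \<partial>lborel)"
  by (subst lborel_affine[OF \<open>c \<noteq> 0\<close>, of t])
    (simp add: nn_integral_density nn_integral_distr nn_integral_cmult)

lemma integral_lborel_affine:
  fixes f :: "'a::euclidean_space \<Rightarrow> 'b::{banach, second_countable_topology}"
  assumes [measurable]: "f \<in> borel_measurable borel" and "c \<noteq> 0"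
  shows "(\<integral>x. f x \<partial>lborel) = (\<bar>c\<bar> ^ DIM('a)) *\<^sub>R (\<integral>x. f (t + c *\<^sub>R x) \<partial>lborel)"
  by (subst lborel_affine[OF \<open>c \<noteq> 0\<close>, of t]) (simp add: integral_density integral_distr)

lemma tendsto_integral_kernel_rescaled:
  fixes k :: "'a::euclidean_space \<Rightarrow> real" and f :: "'a \<Rightarrow> 'b::{banach, second_countable_topology}"
  assumes k: "integrable lborel k"
    and f: "continuous_on UNIV f" "\<And>x. norm (f x) \<le> M"
    and r: "r \<longlonglongrightarrow> 0"
  shows "(\<lambda>n. \<integral>u. k u *\<^sub>R f (a + r n *\<^sub>R u) \<partial>lborel) \<longlonglongrightarrow> (\<integral>u. k u \<partial>lborel) *\<^sub>R f a"
proof -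
  have [measurable]: "k \<in> borel_measurable lborel" "f \<in> borel_measurable borel"
    using k borel_measurable_continuous_onI[OF f(1)] by auto
  have "(\<lambda>n. \<integral>u. k u *\<^sub>R f (a + r n *\<^sub>R u) \<partial>lborel) \<longlonglongrightarrow> (\<integral>u. k u *\<^sub>R f a \<partial>lborel)"
  proof (rule integral_dominated_convergence[where w = "\<lambda>u. \<bar>k u\<bar> * M"])
    show "integrable lborel (\<lambda>u. \<bar>k u\<bar> * M)"
      using k by (intro integrable_mult_left integrable_abs)
    show "AE u in lborel. norm (k u *\<^sub>R f (a + r n *\<^sub>R u)) \<le> \<bar>k u\<bar> * M" for n
      using f(2) by (simp add: mult_left_mono)
    show "AE u in lborel. (\<lambda>n. k u *\<^sub>R f (a + r n *\<^sub>R u)) \<longlonglongrightarrow> k u *\<^sub>R f a"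
    proof (rule AE_I2)
      fix u
      have "(\<lambda>n. a + r n *\<^sub>R u) \<longlonglongrightarrow> a"
        using tendsto_add[OF tendsto_const tendsto_scaleR[OF r tendsto_const]] by simp
      moreover have "isCont f a"
        using f(1) by (simp add: continuous_on_eq_continuous_at)
      ultimately show "(\<lambda>n. k u *\<^sub>R f (a + r n *\<^sub>R u)) \<longlonglongrightarrow> k u *\<^sub>R f a"
        by (intro tendsto_scaleR tendsto_const isCont_tendsto_compose[of a f])
    qed
  qed measurable
  then show ?thesis
    using k by simp
qed

lemma relu_net_realises_scaled_l1_dist:
  fixes c :: real and \<theta>\<^sub>0 :: "real ^ 'k::finite"
  assumes "2 * CARD('k) \<le> CARD('l::finite)"
  shows "\<exists>lam :: ('k, 'l) netparam.
           (\<forall>\<theta>. netA lam \<theta> = c * l1_norm (\<theta> - \<theta>\<^sub>0)) \<and> (\<forall>\<theta>. netB lam \<theta> = 0)"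
proof -
  have "card (UNIV :: ('k \<times> bool) set) \<le> card (UNIV :: 'l set)"
    using assms by (simp add: card_cartesian_product[symmetric] UNIV_Times_UNIV[symmetric]
        del: UNIV_Times_UNIV)
  then obtain g :: "'k \<times> bool \<Rightarrow> 'l" where g: "inj g"
    using card_le_inj[of "UNIV :: ('k \<times> bool) set" "UNIV :: 'l set"] by auto
  define h where "h = inv g"
  have hg: "h (g p) = p" for p
    unfolding h_def using g by simp
  define sg :: "bool \<Rightarrow> real" where "sg s = (if s then 1 else -1)" for s
  \<comment> \<open>neuron g (i, s) computes ReLU (sg s * (\<theta>_i - \<theta>0_i)); all other neurons are switched off\<close>
  define w :: "real ^ 'k ^ 'l" where
    "w = (\<chi> j. if j \<in> range g then sg (snd (h j)) *\<^sub>R axis (fst (h j)) 1 else 0)"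
  define b :: "real ^ 'l" where
    "b = (\<chi> j. if j \<in> range g then - (sg (snd (h j)) * \<theta>\<^sub>0 $ fst (h j)) else 0)"
  define wA :: "real ^ 'l" where "wA = (\<chi> j. if j \<in> range g then c else 0)"
  define lam :: "('k, 'l) netparam" where "lam = (w, b, wA, 0, 0, 0)"
  have "netA lam \<theta> = c * l1_norm (\<theta> - \<theta>\<^sub>0)" for \<theta>
  proof -
    let ?X = "\<lambda>j. wA $ j * relu_hidden w b \<theta> $ j"
    have "netA lam \<theta> = (\<Sum>j\<in>range g. ?X j)"
      by (simp add: lam_def netA_def inner_vec_def)
        (rule sum.mono_neutral_right, auto simp: wA_def)
    also have "\<dots> = (\<Sum>p\<in>UNIV. ?X (g p))"
      by (rule sum.reindex[OF g, unfolded comp_def])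
    also have "\<dots> = (\<Sum>(i, s)\<in>UNIV. c * max 0 (sg s * (\<theta> $ i - \<theta>\<^sub>0 $ i)))"
      by (intro sum.cong refl) (simp add: wA_def relu_hidden_def w_def b_def hg split_beta
          matrix_vector_mul_component inner_axis' algebra_simps)
    also have "\<dots> = (\<Sum>i\<in>UNIV. \<Sum>s\<in>UNIV. c * max 0 (sg s * (\<theta> $ i - \<theta>\<^sub>0 $ i)))"
      by (simp add: UNIV_Times_UNIV[symmetric] sum.cartesian_product del: UNIV_Times_UNIV)
    also have "\<dots> = c * l1_norm (\<theta> - \<theta>\<^sub>0)"
      by (auto simp: l1_norm_def sum_distrib_left UNIV_bool sg_def max_def
          distrib_left[symmetric] intro!: sum.cong)
    finally show ?thesis .
  qed
  moreover have "netB lam \<theta> = 0" for \<theta>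
    by (simp add: lam_def netB_def)
  ultimately show ?thesis
    by blast
qed

lemma norm_unitary_mat_column:
  fixes M :: "complex ^ 'a ^ 'a::finite"
  assumes "unitary_mat M"
  shows "norm (M *v axis j 1) = 1"
proof -
  have "(cadj M ** M) $ j $ j = 1"
    using assms by (simp add: unitary_mat_def mat_def)
  then have "(\<Sum>i\<in>UNIV. cnj (M $ i $ j) * M $ i $ j) = 1"
    by (simp add: matrix_matrix_mult_def cadj_def)
  then have "complex_of_real (\<Sum>i\<in>UNIV. (cmod (M $ i $ j))\<^sup>2) = 1"
    unfolding of_real_sum complex_norm_square by (simp add: mult.commute)
  then have "(\<Sum>i\<in>UNIV. (cmod (M $ i $ j))\<^sup>2) = 1"
    using of_real_eq_1_iff by blast
  moreover have "M *v axis j 1 = (\<chi> i. M $ i $ j)"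
    by (simp add: vec_eq_iff matrix_vector_mult_def axis_def sum.delta'
        if_distrib[where f = "\<lambda>x. a * x" for a] cong: if_cong)
  ultimately show ?thesis
    by (simp add: norm_vec_def L2_set_def)
qed

lemma continuous_on_matrix_vector_mult_left:
  fixes U :: "'a::topological_space \<Rightarrow> 'b::real_normed_field ^ 'n::finite ^ 'm::finite"
  assumes "continuous_on S U"
  shows "continuous_on S (\<lambda>t. U t *v v)"
  unfolding matrix_vector_mult_def
  by (intro continuous_on_vec_lambda continuous_intros continuous_on_component assms)

lemma complex_of_real_vector_scalar_mult: "complex_of_real r *s v = r *\<^sub>R v"
  by (simp add: vec_eq_iff of_real_def)

lemma inverse_complex_of_real_vector_scalar_mult: "(1 / complex_of_real r) *s v = (1 / r) *\<^sub>R v"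
  by (metis complex_of_real_vector_scalar_mult of_real_1 of_real_divide)

lemma normC_laplace:
  fixes lam :: "('k::finite, 'l::finite) netparam"
  assumes A: "\<And>\<theta>. netA lam \<theta> = c * l1_norm (\<theta> - \<theta>\<^sub>0)" and "c > 0"
  shows "normC (\<lambda>a. exp (- a)) (\<lambda>_. 1) lam = ennreal ((2 / c) ^ CARD('k))"
proof -
  have rescale: "c * l1_norm ((1 / c) *\<^sub>R u) = l1_norm u" for u
    using \<open>c > 0\<close> by (simp add: l1_norm_scaleR)
  have "normC (\<lambda>a. exp (- a)) (\<lambda>_. 1) lam = (\<integral>\<^sup>+\<theta>. ennreal (exp (- (c * l1_norm (\<theta> - \<theta>\<^sub>0)))) \<partial>lborel)"
    by (simp add: normC_def guiding_def A norm_mult)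
  also have "\<dots> = ennreal (\<bar>1 / c\<bar> ^ DIM(real ^ 'k)) *
      (\<integral>\<^sup>+u. ennreal (exp (- (c * l1_norm ((\<theta>\<^sub>0 + (1 / c) *\<^sub>R u) - \<theta>\<^sub>0)))) \<partial>lborel)"
    by (rule nn_integral_lborel_affine) (use \<open>c > 0\<close> in auto)
  also have "\<dots> = ennreal ((1 / c) ^ CARD('k)) * 2 ^ CARD('k)"
    using \<open>c > 0\<close> by (simp add: rescale nn_integral_exp_neg_l1_norm)
  also have "\<dots> = ennreal ((2 / c) ^ CARD('k))"
    using \<open>c > 0\<close> by (simp add: ennreal_two_power ennreal_mult[symmetric] power_divide)
  finally show ?thesis .
qed

lemma psi_laplace:
  fixes lam :: "('k::finite, 'l::finite) netparam" and \<phi> :: "real ^ 'k \<Rightarrow> complex ^ 'd::finite"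
  assumes A: "\<And>\<theta>. netA lam \<theta> = c * l1_norm (\<theta> - \<theta>\<^sub>0)" and B: "\<And>\<theta>. netB lam \<theta> = 0"
    and "c > 0" and [measurable]: "\<phi> \<in> borel_measurable borel"
  shows "psi (\<lambda>a. exp (- a)) (\<lambda>_. 1) \<phi> lam =
     (1 / 2 ^ CARD('k)) *\<^sub>R (\<integral>u. exp (- l1_norm u) *\<^sub>R \<phi> (\<theta>\<^sub>0 + (1 / c) *\<^sub>R u) \<partial>lborel)"
proof -
  have rescale: "c * l1_norm ((1 / c) *\<^sub>R u) = l1_norm u" for u
    using \<open>c > 0\<close> by (simp add: l1_norm_scaleR)
  have "(\<integral>\<theta>. guiding (\<lambda>a. exp (- a)) (\<lambda>_. 1) lam \<theta> *s \<phi> \<theta> \<partial>lborel)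
      = (\<integral>\<theta>. exp (- (c * l1_norm (\<theta> - \<theta>\<^sub>0))) *\<^sub>R \<phi> \<theta> \<partial>lborel)"
    by (simp add: guiding_def A B complex_of_real_vector_scalar_mult)
  also have "\<dots> = (\<bar>1 / c\<bar> ^ DIM(real ^ 'k)) *\<^sub>R (\<integral>u. exp (- (c * l1_norm ((\<theta>\<^sub>0 + (1 / c) *\<^sub>R u) - \<theta>\<^sub>0)))
      *\<^sub>R \<phi> (\<theta>\<^sub>0 + (1 / c) *\<^sub>R u) \<partial>lborel)"
    by (rule integral_lborel_affine) (use \<open>c > 0\<close> in auto)
  finally have integral: "(\<integral>\<theta>. guiding (\<lambda>a. exp (- a)) (\<lambda>_. 1) lam \<theta> *s \<phi> \<theta> \<partial>lborel) = (1 / c) ^ CARD('k)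
      *\<^sub>R (\<integral>u. exp (- l1_norm u) *\<^sub>R \<phi> (\<theta>\<^sub>0 + (1 / c) *\<^sub>R u) \<partial>lborel)"
    using \<open>c > 0\<close> by (simp add: rescale)
  have normC: "enn2real (normC (\<lambda>a. exp (- a)) (\<lambda>_. 1) lam) = (2 / c) ^ CARD('k)"
    using normC_laplace[OF A \<open>c > 0\<close>] \<open>c > 0\<close> by simp
  show ?thesis
    unfolding psi_def integral normC inverse_complex_of_real_vector_scalar_mult
    using \<open>c > 0\<close> by (simp add: power_divide)
qed

lemma tendsto_psi_laplace:
  fixes lam :: "nat \<Rightarrow> ('k::finite, 'l::finite) netparam" and \<phi> :: "real ^ 'k \<Rightarrow> complex ^ 'd::finite"
  assumes A: "\<And>n \<theta>. netA (lam n) \<theta> = c n * l1_norm (\<theta> - \<theta>\<^sub>0)"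
    and B: "\<And>n \<theta>. netB (lam n) \<theta> = 0"
    and c: "\<And>n. c n > 0" "filterlim c at_top sequentially"
    and \<phi>: "continuous_on UNIV \<phi>" "\<And>\<theta>. norm (\<phi> \<theta>) \<le> 1"
  shows "(\<lambda>n. psi (\<lambda>a. exp (- a)) (\<lambda>_. 1) \<phi> (lam n)) \<longlonglongrightarrow> \<phi> \<theta>\<^sub>0"
proof -
  have r: "(\<lambda>n. 1 / c n) \<longlonglongrightarrow> 0"
    using tendsto_inverse_0_at_top[OF c(2)] by (simp add: inverse_eq_divide)
  have "(\<lambda>n. (1 / 2 ^ CARD('k)) *\<^sub>R
      (\<integral>u. exp (- l1_norm u) *\<^sub>R \<phi> (\<theta>\<^sub>0 + (1 / c n) *\<^sub>R u) \<partial>lborel))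
    \<longlonglongrightarrow> (1 / 2 ^ CARD('k)) *\<^sub>R ((\<integral>u. exp (- l1_norm (u :: real ^ 'k)) \<partial>lborel) *\<^sub>R \<phi> \<theta>\<^sub>0)"
    by (intro tendsto_scaleR tendsto_const
        tendsto_integral_kernel_rescaled[OF integrable_exp_neg_l1_norm \<phi> r])
  moreover have "\<phi> \<in> borel_measurable borel"
    using \<phi>(1) by (rule borel_measurable_continuous_onI)
  ultimately show ?thesis
    by (simp add: psi_laplace[OF A B c(1)] integral_exp_neg_l1_norm)
qed

lemma tendsto_exp_one_psi_tilde:
  assumes psi: "(\<lambda>n. psi W F \<phi> (lam n)) \<longlonglongrightarrow> v" and "norm v = 1"
  shows "(\<lambda>n. exp_one W F \<phi> (lam n)) \<longlonglongrightarrow> 1"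
    and "(\<lambda>n. psi_tilde W F \<phi> (lam n)) \<longlonglongrightarrow> v"
proof -
  show exp_one: "(\<lambda>n. exp_one W F \<phi> (lam n)) \<longlonglongrightarrow> 1"
    unfolding exp_one_def using tendsto_power[OF tendsto_norm[OF psi], of 2] \<open>norm v = 1\<close>
    by simp
  have "(\<lambda>n. (1 / sqrt (exp_one W F \<phi> (lam n))) *\<^sub>R psi W F \<phi> (lam n)) \<longlonglongrightarrow> (1 / sqrt 1) *\<^sub>R v"
    by (intro tendsto_intros exp_one psi) simp
  then show "(\<lambda>n. psi_tilde W F \<phi> (lam n)) \<longlonglongrightarrow> v"
    by (simp add: psi_tilde_def)
qed

lemma psi_tilde_in_Vset:
  fixes lam :: "('k::finite, 'l::finite) netparam"
  assumes "normC W F lam < \<infinity>" "0 < normC W F lam" "0 < exp_one W F \<phi> lam" "x \<le> exp_one W F \<phi> lam"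
  shows "psi_tilde W F \<phi> lam \<in> Vset W F \<phi> TYPE('l) x"
  using assms unfolding Vset_def by blast

lemma INF_norm_diff_eq_0_if_tendsto:
  fixes a :: "'a::real_normed_vector"
  assumes "F \<noteq> bot" "eventually (\<lambda>n. s n \<in> S) F" "(s \<longlongrightarrow> a) F"
  shows "(INF v\<in>S. norm (v - a)) = 0"
proof (rule antisym)
  have "S \<noteq> {}"
    using eventually_happens'[OF assms(1,2)] by auto
  then show "0 \<le> (INF v\<in>S. norm (v - a))"
    by (rule cINF_greatest) simp
  have bdd: "bdd_below ((\<lambda>v. norm (v - a)) ` S)"
    by (rule bdd_belowI[where m = 0]) auto
  have "eventually (\<lambda>n. (INF v\<in>S. norm (v - a)) \<le> norm (s n - a)) F"
    using assms(2) by eventually_elim (rule cINF_lower[OF bdd])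
  moreover have "((\<lambda>n. norm (s n - a)) \<longlongrightarrow> 0) F"
    using tendsto_norm[OF LIM_zero[OF assms(3)]] by simp
  ultimately show "(INF v\<in>S. norm (v - a)) \<le> 0"
    using assms(1) by (intro tendsto_le[OF _ _ tendsto_const])
qed

theorem theorem3:
  fixes U :: "real ^ 'k \<Rightarrow> complex ^ ('n::finite \<Rightarrow> bool) ^ ('n \<Rightarrow> bool)"
    and \<xi> :: real
  assumes unitary: "\<And>\<theta>. unitary_mat (U \<theta>)"
    and diff: "\<And>\<theta>. U differentiable (at \<theta>)"
    and xi_pos: "\<xi> > 0"
    and grad_bound: "\<And>\<theta> v. norm v = 1 \<Longrightarrow>
           norm (frechet_derivative (\<lambda>t. U t *v ket0) (at \<theta>) v) \<le> \<xi>"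
    and L_ge: "CARD('l::finite) \<ge> 2 * CARD('k::finite)"
  shows "\<forall>\<theta> :: real ^ 'k. \<forall>x :: real. x < 1 \<longrightarrow>
           (INF v \<in> Vset (\<lambda>a. exp (- a)) (\<lambda>_. 1) (\<lambda>t. U t *v ket0) TYPE('l) x.
              norm (v - U \<theta> *v ket0)) = 0"
proof (intro allI impI)
  fix \<theta>\<^sub>0 :: "real ^ 'k" and x :: real
  assume "x < 1"
  let ?W = "\<lambda>a. exp (- a)" and ?F = "\<lambda>_. 1"
  define \<phi> where "\<phi> = (\<lambda>t. U t *v ket0)"
  have norm_\<phi>: "norm (\<phi> t) = 1" for t
    unfolding \<phi>_def ket0_def using unitary by (rule norm_unitary_mat_column)
  have "continuous_on UNIV U"
    using diff by (intro continuous_at_imp_continuous_on ballI differentiable_imp_continuous_within)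
  then have continuous_\<phi>: "continuous_on UNIV \<phi>"
    unfolding \<phi>_def by (rule continuous_on_matrix_vector_mult_left)
  have "\<forall>n. \<exists>lam :: ('k, 'l) netparam. (\<forall>\<theta>. netA lam \<theta> = real (Suc n) * l1_norm (\<theta> - \<theta>\<^sub>0)) \<and>
      (\<forall>\<theta>. netB lam \<theta> = 0)"
    using relu_net_realises_scaled_l1_dist[OF L_ge] by blast
  then obtain lam :: "nat \<Rightarrow> ('k, 'l) netparam" where
    A: "\<And>n \<theta>. netA (lam n) \<theta> = real (Suc n) * l1_norm (\<theta> - \<theta>\<^sub>0)" and
    B: "\<And>n \<theta>. netB (lam n) \<theta> = 0"
    by metis
  have "filterlim (\<lambda>n. real (Suc n)) at_top sequentially"
    by (subst filterlim_sequentially_Suc) (rule filterlim_real_sequentially)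
  then have "(\<lambda>n. psi ?W ?F \<phi> (lam n)) \<longlonglongrightarrow> \<phi> \<theta>\<^sub>0"
    using tendsto_psi_laplace[OF A B _ _ continuous_\<phi>] norm_\<phi> by simp
  note limits = tendsto_exp_one_psi_tilde[OF this norm_\<phi>]
  have "eventually (\<lambda>n. max x 0 < exp_one ?W ?F \<phi> (lam n)) sequentially"
    using order_tendstoD(1)[OF limits(1), of "max x 0"] \<open>x < 1\<close> by simp
  then have "eventually (\<lambda>n. psi_tilde ?W ?F \<phi> (lam n) \<in> Vset ?W ?F \<phi> TYPE('l) x) sequentially"
    by eventually_elim (intro psi_tilde_in_Vset, simp_all add: normC_laplace[OF A])
  from INF_norm_diff_eq_0_if_tendsto[OF sequentially_bot this limits(2)]
  show "(INF v \<in> Vset ?W ?F (\<lambda>t. U t *v ket0) TYPE('l) x. norm (v - U \<theta>\<^sub>0 *v ket0)) = 0"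
    unfolding \<phi>_def .
qed

end
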